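(* Let $d,l\in\mathbb{N}$, let $\gamma\colon[0,1]\to(0,1)^d$ be the length parameterisation of a line segment, let $\mathcal{P}$ be a dense subset of $\operatorname{Lip}_1([0,1],\mathbb{R})$, $t_0\in(0,1)$, let $f=(f_1,\ldots,f_l)\in\operatorname{Lip}_1([0,1]^d,\mathbb{R}^l)$ with $\operatorname{Lip}(f)<1$, $\varepsilon\in(0,1)$ and $j\in\{1,\ldots,l\}$. Then there exist $p\in\mathcal{P}$, $\eta>0$ and $g=(g_1,\ldots,g_l)\in\operatorname{Lip}_1([0,1]^d,\mathbb{R}^l)$ such that: (i) $\|g(x)-f(x)\|\leq\varepsilon$ for all $x\in[0,1]^d$; (ii) $g_j(\gamma(t))=p(t)$ for all $t\in(t_0-\eta,t_0+\eta)\cap[0,1]$; (iii) if $l=1$, then $g_1\circ\gamma=p$ on $[0,1]$.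
   Context: $\operatorname{Lip}_1([0,1]^d,\mathbb{R}^l)$ is the space of mappings $[0,1]^d\to\mathbb{R}^l$ with Lipschitz constant at most $1$, with the supremum metric. A length parameterisation of a line segment is a map $\gamma(t)=a+tv$ with $\|v\|=1$. *)

theory Defs
  imports "HOL-Analysis.Analysis"
begin

text \<open>Lip_1(K, Y): maps defined (at least) on K with Lipschitz constant at most 1 on K.
  Functions are total HOL functions; only their values on K matter.\<close>
definition Lip1 :: "'a::metric_space set \<Rightarrow> ('a \<Rightarrow> 'b::metric_space) set" where
  "Lip1 K = {f. 1-lipschitz_on K f}"

definition dense_in_Lip1_unit :: "(real \<Rightarrow> real) set \<Rightarrow> bool" where
  "dense_in_Lip1_unit P \<longleftrightarrow> P \<subseteq> Lip1 {0..1} \<and>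
     (\<forall>h \<in> Lip1 {0..1}. \<forall>e>0. \<exists>p\<in>P. (SUP t\<in>{0..1}. \<bar>p t - h t\<bar>) < e)"

end

(*
  For l = 1 the trace can be prescribed globally: take p \<in> P uniformly close to
  t \<mapsto> f\<^sub>j (\<gamma> t) and clamp p \<circ> \<pi> between f - \<epsilon> and f + \<epsilon>, where \<pi> is the
  nearest-point parameter of the segment. Max and min preserve 1-Lipschitz bounds, and
  along \<gamma> the clamp is inactive.

  For general l only local agreement is possible. Take p \<in> P close to the constant
  f\<^sub>j (x\<^sub>0), x\<^sub>0 = \<gamma> t\<^sub>0, precompose f with the nonexpansive map collapsing the ball
  B(x\<^sub>0, r) to its centre, and add in direction e\<^sub>j the function p \<circ> \<pi> - f\<^sub>j (x\<^sub>0)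
  clamped to the tent r - |x - x\<^sub>0|. The bump lives inside the ball, where the
  collapsed f is constant; a pair of points on either side of the sphere is handled
  by the slack |x - x\<^sub>0| - r of the collapse outside the ball.
*)
theory Submission
  imports Defs
begin

text \<open>\<open>radial_shrink r u\<close> is \<open>u\<close> minus its nearest point in \<open>cball 0 r\<close>.\<close>

definition radial_shrink :: "real \<Rightarrow> 'a::real_normed_vector \<Rightarrow> 'a" where
  "radial_shrink r u = (if norm u \<le> r then 0 else (1 - r / norm u) *\<^sub>R u)"

lemma radial_shrink_eq_scaleR:
  assumes "r \<ge> 0"
  obtains s where "s \<in> {0..1}" "radial_shrink r u = s *\<^sub>R u"
proof (cases "norm u \<le> r")
  case True
  then show ?thesis by (intro that[of 0]) (simp_all add: radial_shrink_def)
next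
  case False
  then show ?thesis using assms
    by (intro that[of "1 - r / norm u"]) (simp_all add: radial_shrink_def divide_le_eq_1)
qed

lemma norm_radial_shrink:
  assumes "r \<ge> 0"
  shows "norm (radial_shrink r u) = max 0 (norm u - r)"
proof (cases "norm u \<le> r")
  case False
  then have "norm (radial_shrink r u) = (1 - r / norm u) * norm u"
    using assms by (simp add: radial_shrink_def divide_le_eq_1)
  also have "\<dots> = norm u - r" using False assms by (auto simp: field_simps)
  finally show ?thesis using False by simp
qed (simp add: radial_shrink_def)

lemma norm_radial_shrink_minus_le:
  assumes "r \<ge> 0"
  shows "norm (radial_shrink r u - u) \<le> r"
proof (cases "norm u \<le> r")
  case False
  then have "radial_shrink r u - u = - ((r / norm u) *\<^sub>R u)"
    by (simp add: radial_shrink_def algebra_simps)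
  then show ?thesis using False assms by simp
qed (simp add: radial_shrink_def)

lemma radial_shrink_nonexpansive:
  fixes u w :: "'a::real_inner"
  assumes r: "r \<ge> 0"
  shows "norm (radial_shrink r u - radial_shrink r w) \<le> norm (u - w)"
proof -
  have one_inside: "norm (radial_shrink r u - radial_shrink r w) \<le> norm (u - w)"
    if "norm w \<le> r" for u w :: 'a
  proof -
    have "norm (radial_shrink r u - radial_shrink r w) = max 0 (norm u - r)"
      using that r by (simp add: radial_shrink_def[of r w] norm_radial_shrink)
    also have "\<dots> \<le> norm (u - w)"
      using that norm_triangle_ineq2[of u w] by simp
    finally show ?thesis .
  qed
  consider "norm w \<le> r" | "norm u \<le> r" | "norm u > r" "norm w > r" by linarith
  then show ?thesis
  proof cases
    case 2
    then show ?thesis using one_inside[of u w] by (simp add: norm_minus_commute)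
  next
    case 3
    define A B where "A = norm u" and "B = norm w"
    define s s' where "s = 1 - r / A" and "s' = 1 - r / B"
    have A: "s * A = A - r" and B: "s' * B = B - r"
      using 3 r by (auto simp: s_def s'_def A_def B_def field_simps)
    have "s * s' \<le> 1"
      using 3 r by (intro mult_le_one) (simp_all add: s_def s'_def A_def B_def divide_le_eq_1)
    then have "(1 - s * s') * inner u w \<le> (1 - s * s') * (A * B)"
      unfolding A_def B_def by (intro mult_left_mono norm_cauchy_schwarz) simp
    also have "\<dots> = A * B - (s * A) * (s' * B)" by (simp add: algebra_simps)
    finally have "(s * A)\<^sup>2 + (s' * B)\<^sup>2 - 2 * (s * s') * inner u w \<le> A\<^sup>2 + B\<^sup>2 - 2 * inner u w"
      unfolding A B by (simp add: algebra_simps power2_eq_square)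
    moreover have "(norm (s *\<^sub>R u - s' *\<^sub>R w))\<^sup>2 = (s * A)\<^sup>2 + (s' * B)\<^sup>2 - 2 * (s * s') * inner u w"
      and "(norm (u - w))\<^sup>2 = A\<^sup>2 + B\<^sup>2 - 2 * inner u w"
      unfolding A_def B_def power_mult_distrib power2_norm_eq_inner
      by (simp_all add: inner_diff_left inner_diff_right inner_commute algebra_simps power2_eq_square)
    ultimately have "(norm (s *\<^sub>R u - s' *\<^sub>R w))\<^sup>2 \<le> (norm (u - w))\<^sup>2"
      by simp
    then show ?thesis
      using 3 by (simp add: radial_shrink_def s_def s'_def A_def B_def power2_le_iff_abs_le)
  qed (rule one_inside)
qed

lemma lipschitz_on_max:
  fixes f g :: "'a::metric_space \<Rightarrow> real"
  assumes "C-lipschitz_on U f" "C-lipschitz_on U g"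
  shows "C-lipschitz_on U (\<lambda>x. max (f x) (g x))"
proof (rule lipschitz_onI)
  fix x y assume "x \<in> U" "y \<in> U"
  then have "\<bar>f x - f y\<bar> \<le> C * dist x y" "\<bar>g x - g y\<bar> \<le> C * dist x y"
    using lipschitz_onD[OF assms(1)] lipschitz_onD[OF assms(2)] by (simp_all add: dist_real_def)
  then show "dist (max (f x) (g x)) (max (f y) (g y)) \<le> C * dist x y"
    by (simp add: dist_real_def max_def abs_le_iff)
qed (rule lipschitz_on_nonneg[OF assms(1)])

lemma lipschitz_on_min:
  fixes f g :: "'a::metric_space \<Rightarrow> real"
  assumes "C-lipschitz_on U f" "C-lipschitz_on U g"
  shows "C-lipschitz_on U (\<lambda>x. min (f x) (g x))"
proof (rule lipschitz_onI)
  fix x y assume "x \<in> U" "y \<in> U"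
  then have "\<bar>f x - f y\<bar> \<le> C * dist x y" "\<bar>g x - g y\<bar> \<le> C * dist x y"
    using lipschitz_onD[OF assms(1)] lipschitz_onD[OF assms(2)] by (simp_all add: dist_real_def)
  then show "dist (min (f x) (g x)) (min (f y) (g y)) \<le> C * dist x y"
    by (simp add: dist_real_def min_def abs_le_iff)
qed (rule lipschitz_on_nonneg[OF assms(1)])

lemma ball_collapse_in_convex:
  fixes x0 :: "'a::real_normed_vector"
  assumes "convex K" "x0 \<in> K" "x \<in> K" "r \<ge> 0"
  shows "x0 + radial_shrink r (x - x0) \<in> K"
proof -
  obtain s where s: "s \<in> {0..1}" "radial_shrink r (x - x0) = s *\<^sub>R (x - x0)"
    using radial_shrink_eq_scaleR[OF assms(4)] .
  then have "x0 + radial_shrink r (x - x0) = (1 - s) *\<^sub>R x0 + s *\<^sub>R x"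
    by (simp add: algebra_simps)
  also have "\<dots> \<in> K" using assms s by (intro convexD) auto
  finally show ?thesis .
qed

lemma lipschitz_on_ball_collapse_plus_bump:
  fixes f :: "'a::real_inner \<Rightarrow> 'b::real_normed_vector" and \<psi> :: "'a \<Rightarrow> real"
  assumes K: "convex K" "x0 \<in> K" and r: "r \<ge> 0"
    and f: "1-lipschitz_on K f" and \<psi>: "1-lipschitz_on K \<psi>"
    and \<psi>_bound: "\<And>x. x \<in> K \<Longrightarrow> \<bar>\<psi> x\<bar> \<le> max 0 (r - norm (x - x0))"
    and e: "norm e = 1"
  shows "1-lipschitz_on K (\<lambda>x. f (x0 + radial_shrink r (x - x0)) + \<psi> x *\<^sub>R e)"
proof (rule lipschitz_onI)
  define \<rho> where "\<rho> x = x0 + radial_shrink r (x - x0)" for x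
  have f\<rho>: "norm (f (\<rho> x) - f (\<rho> y)) \<le> norm (radial_shrink r (x - x0) - radial_shrink r (y - x0))"
    if "x \<in> K" "y \<in> K" for x y
    using lipschitz_on_normD[OF f ball_collapse_in_convex[OF K that(1) r]
        ball_collapse_in_convex[OF K that(2) r]]
    by (simp add: \<rho>_def)
  have \<psi>': "\<bar>\<psi> x - \<psi> y\<bar> \<le> norm (x - y)" if "x \<in> K" "y \<in> K" for x y
    using lipschitz_onD[OF \<psi> that] by (simp add: dist_real_def dist_norm)
  have one_inside: "norm (f (\<rho> x) - f (\<rho> y)) + \<bar>\<psi> x - \<psi> y\<bar> \<le> norm (x - y)"
    if xy: "x \<in> K" "y \<in> K" and "norm (x - x0) \<le> r" "norm (y - x0) > r" for x y
  proof -
    have "norm (f (\<rho> x) - f (\<rho> y)) \<le> norm (y - x0) - r"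
      using f\<rho>[OF xy] that(3,4) r by (simp add: radial_shrink_def[of r "x - x0"] norm_radial_shrink)
    moreover have "\<bar>\<psi> x - \<psi> y\<bar> \<le> r - norm (x - x0)"
      using \<psi>_bound[OF xy(1)] \<psi>_bound[OF xy(2)] that(3,4) by simp
    moreover have "norm (y - x0) - norm (x - x0) \<le> norm (x - y)"
      using norm_triangle_ineq2[of "y - x0" "x - x0"] by (simp add: norm_minus_commute)
    ultimately show ?thesis by linarith
  qed
  fix x y assume xy: "x \<in> K" "y \<in> K"
  have sum_le: "norm (f (\<rho> x) - f (\<rho> y)) + \<bar>\<psi> x - \<psi> y\<bar> \<le> norm (x - y)"
  proof (cases "norm (x - x0) \<le> r"; cases "norm (y - x0) \<le> r")
    assume "norm (x - x0) \<le> r" "norm (y - x0) \<le> r"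
    then show ?thesis using \<psi>'[OF xy] by (simp add: \<rho>_def radial_shrink_def)
  next
    assume "\<not> norm (x - x0) \<le> r" "\<not> norm (y - x0) \<le> r"
    then show ?thesis
      using f\<rho>[OF xy] \<psi>_bound[OF xy(1)] \<psi>_bound[OF xy(2)] radial_shrink_nonexpansive[OF r, of "x - x0" "y - x0"]
      by simp
  qed (use one_inside[OF xy] one_inside[OF xy(2,1)] in \<open>auto simp: norm_minus_commute abs_minus_commute\<close>)
  have "norm (f (\<rho> x) + \<psi> x *\<^sub>R e - (f (\<rho> y) + \<psi> y *\<^sub>R e))
      = norm ((f (\<rho> x) - f (\<rho> y)) + (\<psi> x - \<psi> y) *\<^sub>R e)"
    by (rule arg_cong[where f = norm]) (simp add: algebra_simps)
  also have "\<dots> \<le> norm (f (\<rho> x) - f (\<rho> y)) + \<bar>\<psi> x - \<psi> y\<bar>"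
    using norm_triangle_ineq[of "f (\<rho> x) - f (\<rho> y)" "(\<psi> x - \<psi> y) *\<^sub>R e"] e by simp
  also note sum_le
  finally show "dist (f (\<rho> x) + \<psi> x *\<^sub>R e) (f (\<rho> y) + \<psi> y *\<^sub>R e) \<le> 1 * dist x y"
    by (simp add: dist_norm \<rho>_def)
qed simp

definition segment_param :: "'a::real_inner \<Rightarrow> 'a \<Rightarrow> 'a \<Rightarrow> real" where
  "segment_param a v x = max 0 (min 1 (inner (x - a) v))"

lemma segment_param_in: "segment_param a v x \<in> {0..1}"
  by (simp add: segment_param_def)

lemma segment_param_along:
  assumes "norm v = 1" "t \<in> {0..1}"
  shows "segment_param a v (a + t *\<^sub>R v) = t"
  using assms by (simp add: segment_param_def power2_norm_eq_inner[symmetric])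

lemma lipschitz_on_segment_param:
  assumes "norm v \<le> 1"
  shows "1-lipschitz_on S (segment_param a v)"
proof -
  have "1-lipschitz_on S (\<lambda>x. inner (x - a) v)"
  proof (rule lipschitz_onI)
    fix x y
    have "\<bar>inner (x - a) v - inner (y - a) v\<bar> = \<bar>inner (x - y) v\<bar>"
      by (simp add: inner_diff_left)
    also have "\<dots> \<le> norm (x - y) * norm v" by (rule Cauchy_Schwarz_ineq2)
    also have "\<dots> \<le> norm (x - y)" using assms by (simp add: mult_left_le)
    finally show "dist (inner (x - a) v) (inner (y - a) v) \<le> 1 * dist x y"
      by (simp add: dist_real_def dist_norm)
  qed simp
  then show ?thesis
    unfolding segment_param_def
    by (intro lipschitz_on_max lipschitz_on_min lipschitz_on_le[OF lipschitz_on_constant]) simp_all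
qed

lemma lipschitz_on_comp_segment_param:
  assumes "norm v \<le> 1" "1-lipschitz_on {0..1} p"
  shows "1-lipschitz_on S (\<lambda>x. p (segment_param a v x))"
proof -
  have "segment_param a v ` S \<subseteq> {0..1}" using segment_param_in by blast
  then show ?thesis
    using lipschitz_on_compose2[OF lipschitz_on_segment_param[OF assms(1)]
        lipschitz_on_subset[OF assms(2)]] by simp
qed

lemma dense_in_Lip1_unitE:
  assumes "dense_in_Lip1_unit P" "1-lipschitz_on {0..1} h" "e > 0"
  obtains p where "p \<in> P" "1-lipschitz_on {0..1} p" "\<And>t. t \<in> {0..1} \<Longrightarrow> \<bar>p t - h t\<bar> < e"
proof -
  obtain p where p: "p \<in> P" "1-lipschitz_on {0..1} p"
    and sup: "(SUP t\<in>{0..1}. \<bar>p t - h t\<bar>) < e"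
    using assms unfolding dense_in_Lip1_unit_def Lip1_def by blast
  have "continuous_on {0..1} (\<lambda>t. \<bar>p t - h t\<bar>)"
    using lipschitz_on_continuous_on[OF p(2)] lipschitz_on_continuous_on[OF assms(2)]
    by (intro continuous_intros)
  then have "bdd_above ((\<lambda>t. \<bar>p t - h t\<bar>) ` {0..1})"
    by (intro bounded_imp_bdd_above compact_imp_bounded compact_continuous_image) auto
  then have "\<bar>p t - h t\<bar> < e" if "t \<in> {0..1}" for t
    using cSUP_upper[OF that] sup by fastforce
  with p show ?thesis by (rule that)
qed

lemma exists_lipschitz_local_trace:
  fixes f :: "'a::real_inner \<Rightarrow> 'b::real_inner"
  assumes K: "convex K" and v: "norm v = 1" and seg: "\<And>t. t \<in> {0..1} \<Longrightarrow> a + t *\<^sub>R v \<in> K"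
    and t0: "t0 \<in> {0..1}" and f: "1-lipschitz_on K f" and p: "1-lipschitz_on {0..1} p"
    and e: "norm e = 1" and r: "r > 0"
    and p_t0: "\<bar>p t0 - inner (f (a + t0 *\<^sub>R v)) e\<bar> \<le> r / 2"
  shows "\<exists>g. 1-lipschitz_on K g \<and> (\<forall>x\<in>K. norm (g x - f x) \<le> 2 * r) \<and>
           (\<forall>t\<in>{t0 - r/4<..<t0 + r/4} \<inter> {0..1}. inner (g (a + t *\<^sub>R v)) e = p t)"
proof -
  define x0 where "x0 = a + t0 *\<^sub>R v"
  define c where "c = inner (f x0) e"
  define h where "h x = max 0 (r - norm (x - x0))" for x
  define \<psi> where "\<psi> x = max (- h x) (min (h x) (p (segment_param a v x) - c))" for x
  define g where "g x = f (x0 + radial_shrink r (x - x0)) + \<psi> x *\<^sub>R e" for x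
  have x0: "x0 \<in> K" using seg t0 by (simp add: x0_def)
  have h_lip: "1-lipschitz_on K h"
  proof (rule lipschitz_onI)
    fix x y
    have "\<bar>norm (x - x0) - norm (y - x0)\<bar> \<le> norm (x - y)"
      using norm_triangle_ineq3[of "x - x0" "y - x0"] by simp
    then show "dist (h x) (h y) \<le> 1 * dist x y"
      by (simp add: h_def dist_real_def dist_norm max_def abs_le_iff)
  qed simp
  have "1-lipschitz_on K (\<lambda>x. p (segment_param a v x) - c)"
    using lipschitz_on_diff[OF lipschitz_on_comp_segment_param[OF eq_refl[OF v] p] lipschitz_on_constant]
    by simp
  then have \<psi>_lip: "1-lipschitz_on K \<psi>"
    unfolding \<psi>_def by (intro lipschitz_on_max lipschitz_on_min lipschitz_on_minus h_lip)
  have h_le: "h x \<le> r" and \<psi>_bound: "\<bar>\<psi> x\<bar> \<le> h x" for x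
    using r by (auto simp: \<psi>_def h_def abs_le_iff)
  have "1-lipschitz_on K g"
    unfolding g_def
    by (rule lipschitz_on_ball_collapse_plus_bump[OF K x0 _ f \<psi>_lip _ e])
      (use r \<psi>_bound in \<open>auto simp: h_def\<close>)
  moreover have "norm (g x - f x) \<le> 2 * r" if "x \<in> K" for x
  proof -
    have "norm (g x - f x) \<le> norm (f (x0 + radial_shrink r (x - x0)) - f x) + \<bar>\<psi> x\<bar>"
      using norm_triangle_ineq[of "f (x0 + radial_shrink r (x - x0)) - f x" "\<psi> x *\<^sub>R e"] e
      by (simp add: g_def algebra_simps)
    also have "\<dots> \<le> norm (radial_shrink r (x - x0) - (x - x0)) + h x"
      using lipschitz_on_normD[OF f ball_collapse_in_convex[OF K x0 that less_imp_le[OF r]] that]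
        \<psi>_bound[of x]
      by (simp add: algebra_simps)
    also have "\<dots> \<le> 2 * r"
      using norm_radial_shrink_minus_le[of r "x - x0"] h_le[of x] r by simp
    finally show ?thesis .
  qed
  moreover have "inner (g (a + t *\<^sub>R v)) e = p t"
    if t: "t \<in> {t0 - r/4<..<t0 + r/4} \<inter> {0..1}" for t
  proof -
    have dist_t: "norm (a + t *\<^sub>R v - x0) = \<bar>t - t0\<bar>"
      using v by (simp add: x0_def flip: scaleR_diff_left)
    have near: "\<bar>t - t0\<bar> < r / 4" using t unfolding abs_less_iff by auto
    have "\<bar>p t - p t0\<bar> \<le> \<bar>t - t0\<bar>"
      using lipschitz_onD[OF p] t t0 by (simp add: dist_real_def)
    then have "\<bar>p t - c\<bar> \<le> r - \<bar>t - t0\<bar>"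
      using p_t0 near unfolding c_def x0_def by arith
    then have "\<bar>p t - c\<bar> \<le> h (a + t *\<^sub>R v)"
      using dist_t by (simp add: h_def)
    then have "\<psi> (a + t *\<^sub>R v) = p t - c"
      using segment_param_along[OF v] t by (auto simp: \<psi>_def abs_le_iff)
    moreover have "radial_shrink r (a + t *\<^sub>R v - x0) = 0"
      using dist_t near r by (simp add: radial_shrink_def)
    ultimately show ?thesis
      using e by (simp add: g_def c_def inner_add_left power2_norm_eq_inner[symmetric])
  qed
  ultimately show ?thesis by blast
qed

lemma norm_vec_CARD_1:
  fixes z :: "real ^ 'n"
  assumes "CARD('n) = 1"
  shows "norm z = \<bar>z $ i\<bar>"
proof -
  have UNIV: "UNIV = {i}" using assms by (metis UNIV_I card_1_singletonE singletonD)
  show ?thesis unfolding norm_vec_def L2_set_def UNIV by simp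
qed

lemma exists_lipschitz_global_trace:
  fixes f :: "'a::real_inner \<Rightarrow> real ^ 'l"
  assumes l: "CARD('l) = 1" and v: "norm v = 1"
    and f: "1-lipschitz_on K f" and p: "1-lipschitz_on {0..1} p"
    and p_close: "\<And>t. t \<in> {0..1} \<Longrightarrow> \<bar>p t - f (a + t *\<^sub>R v) $ j\<bar> \<le> \<epsilon>"
  shows "\<exists>g. 1-lipschitz_on K g \<and> (\<forall>x\<in>K. norm (g x - f x) \<le> \<epsilon>) \<and>
           (\<forall>t\<in>{0..1}. g (a + t *\<^sub>R v) $ j = p t)"
proof -
  define G where "G x = max (f x $ j - \<epsilon>) (min (f x $ j + \<epsilon>) (p (segment_param a v x)))" for x
  have fj: "1-lipschitz_on K (\<lambda>x. f x $ j)"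
    using f by (simp add: lipschitz_on_def dist_norm norm_vec_CARD_1[OF l, of _ j])
  have "1-lipschitz_on K G"
    unfolding G_def
    using lipschitz_on_diff[OF fj lipschitz_on_constant] lipschitz_on_add[OF fj lipschitz_on_constant]
      lipschitz_on_comp_segment_param[OF eq_refl[OF v] p]
    by (intro lipschitz_on_max lipschitz_on_min) simp_all
  then have "1-lipschitz_on K (\<lambda>x. vec (G x) :: real ^ 'l)"
    by (simp add: lipschitz_on_def dist_norm norm_vec_CARD_1[OF l, of _ j])
  moreover have "\<epsilon> \<ge> 0" using p_close[of 0] by simp
  then have "norm (vec (G x) - f x) \<le> \<epsilon>" for x
    by (simp add: G_def norm_vec_CARD_1[OF l, of _ j] abs_le_iff max_def min_def)
  moreover have "vec (G (a + t *\<^sub>R v)) $ j = p t" if "t \<in> {0..1}" for t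
    using p_close[OF that] segment_param_along[OF v that] by (auto simp: G_def abs_le_iff)
  ultimately show ?thesis by blast
qed

lemma lipschitz_on_component_along_segment:
  fixes f :: "'a::real_normed_vector \<Rightarrow> real ^ 'l"
  assumes v: "norm v = 1" and seg: "\<And>t. t \<in> {0..1} \<Longrightarrow> a + t *\<^sub>R v \<in> K"
    and f: "1-lipschitz_on K f"
  shows "1-lipschitz_on {0..1} (\<lambda>t. f (a + t *\<^sub>R v) $ j)"
proof (rule lipschitz_onI)
  fix s t :: real assume "s \<in> {0..1}" "t \<in> {0..1}"
  then have "norm (f (a + s *\<^sub>R v) - f (a + t *\<^sub>R v)) \<le> \<bar>s - t\<bar>"
    using lipschitz_on_normD[OF f seg seg] v by (simp flip: scaleR_diff_left)
  then show "dist (f (a + s *\<^sub>R v) $ j) (f (a + t *\<^sub>R v) $ j) \<le> 1 * dist s t"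
    using component_le_norm_cart[of "f (a + s *\<^sub>R v) - f (a + t *\<^sub>R v)" j]
    by (simp add: dist_real_def)
qed simp

theorem lemma6p2:
  fixes a v :: "real ^ 'd"
    and P :: "(real \<Rightarrow> real) set"
    and t0 \<epsilon> :: real
    and f :: "real ^ 'd \<Rightarrow> real ^ 'l"
    and j :: 'l
  assumes v_unit: "norm v = 1"
    and gamma_in: "\<forall>t\<in>{0..1}. a + t *\<^sub>R v \<in> box 0 1"
    and P_dense: "dense_in_Lip1_unit P"
    and t0: "t0 \<in> {0<..<1}"
    and f_Lip1: "f \<in> Lip1 (cbox 0 1)"
    and f_Lip_lt1: "\<exists>L<1. L-lipschitz_on (cbox 0 1) f"
    and eps: "\<epsilon> \<in> {0<..<1}"
  shows "\<exists>p\<in>P. \<exists>\<eta>>0. \<exists>g\<in>Lip1 (cbox 0 1).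
           (\<forall>x\<in>cbox 0 1. norm (g x - f x) \<le> \<epsilon>) \<and>
           (\<forall>t\<in>{t0-\<eta><..<t0+\<eta>} \<inter> {0..1}. g (a + t *\<^sub>R v) $ j = p t) \<and>
           (CARD('l) = 1 \<longrightarrow> (\<forall>t\<in>{0..1}. g (a + t *\<^sub>R v) $ j = p t))"
proof -
  have seg: "a + t *\<^sub>R v \<in> cbox 0 1" if "t \<in> {0..1}" for t
    using gamma_in that box_subset_cbox by blast
  have f: "1-lipschitz_on (cbox 0 1) f" using f_Lip1 by (simp add: Lip1_def)
  have \<epsilon>: "\<epsilon> > 0" using eps by simp
  show ?thesis
  proof (cases "CARD('l) = 1")
    case True
    obtain p where p: "p \<in> P" "1-lipschitz_on {0..1} p"
      and p_close: "\<And>t. t \<in> {0..1} \<Longrightarrow> \<bar>p t - f (a + t *\<^sub>R v) $ j\<bar> < \<epsilon>"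
      using dense_in_Lip1_unitE[OF P_dense lipschitz_on_component_along_segment[OF v_unit seg f] \<epsilon>]
      by blast
    obtain g where "1-lipschitz_on (cbox 0 1) g" "\<forall>x\<in>cbox 0 1. norm (g x - f x) \<le> \<epsilon>"
      "\<forall>t\<in>{0..1}. g (a + t *\<^sub>R v) $ j = p t"
      using exists_lipschitz_global_trace[OF True v_unit f p(2) less_imp_le[OF p_close]] by blast
    with p(1) show ?thesis by (intro bexI[of _ p] exI[of _ 1]) (auto simp: Lip1_def)
  next
    case False
    define c where "c = f (a + t0 *\<^sub>R v) $ j"
    have "1-lipschitz_on {0..1} (\<lambda>t. c)" by (rule lipschitz_on_le[OF lipschitz_on_constant]) simp
    then obtain p where p: "p \<in> P" "1-lipschitz_on {0..1} p"
      and p_close: "\<And>t. t \<in> {0..1} \<Longrightarrow> \<bar>p t - c\<bar> < \<epsilon> / 4"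
      using dense_in_Lip1_unitE[OF P_dense, of _ "\<epsilon> / 4"] \<epsilon> by auto
    have "\<bar>p t0 - inner (f (a + t0 *\<^sub>R v)) (axis j 1)\<bar> \<le> \<epsilon> / 2 / 2"
      using p_close[of t0] t0 by (simp add: c_def flip: cart_eq_inner_axis)
    then obtain g where "1-lipschitz_on (cbox 0 1) g" "\<forall>x\<in>cbox 0 1. norm (g x - f x) \<le> \<epsilon>"
      "\<forall>t\<in>{t0 - \<epsilon>/8<..<t0 + \<epsilon>/8} \<inter> {0..1}. g (a + t *\<^sub>R v) $ j = p t"
      using exists_lipschitz_local_trace[OF convex_box(1) v_unit seg _ f p(2) norm_axis_1[of j], of t0 "\<epsilon> / 2"]
        t0 \<epsilon> by (auto simp flip: cart_eq_inner_axis)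
    with p(1) False \<epsilon> show ?thesis by (intro bexI[of _ p] exI[of _ "\<epsilon> / 8"]) (auto simp: Lip1_def)
  qed
qed

end
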